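(* Let $n\geq5$. For every $1\leq i\leq n-1$ and every integer $0\leq s < i/2$, we have \[w_{i,s}\leq \frac{2}{(i+1)|L_{i+1}|}.\]
   Context: In $\{0,1,2\}^n$ (ordered coordinatewise), $L_i$ is the set of vectors with coordinate sum $i$, $L_i^s$ the elements of $L_i$ with exactly $s$ coordinates equal to $2$, $L_i^{\geq s}=\bigcup_{r\geq s}L_i^r$. For such $i,s$: \[w_{i,s}=\frac{|L_i||L_{i+1}^{\geq s+1}| - |L_{i+1}||L_i^{\geq s+1}|}{|L_i^s||L_i||L_{i+1}|(i-2s)}.\] *)

theory Defs
  imports Complex_Main
begin

text \<open>Vectors of {0,1,2}^n are represented as functions nat => nat with values
  in {0,1,2} on {0..<n} and value 0 outside {0..<n}.\<close>

definition cube :: "nat \<Rightarrow> (nat \<Rightarrow> nat) set" where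
  "cube n = {x. (\<forall>j<n. x j \<le> 2) \<and> (\<forall>j\<ge>n. x j = 0)}"

definition twos :: "nat \<Rightarrow> (nat \<Rightarrow> nat) \<Rightarrow> nat" where
  "twos n x = card {j. j < n \<and> x j = 2}"

definition lev :: "nat \<Rightarrow> nat \<Rightarrow> (nat \<Rightarrow> nat) set" where
  "lev n i = {x \<in> cube n. (\<Sum>j<n. x j) = i}"

definition levs :: "nat \<Rightarrow> nat \<Rightarrow> nat \<Rightarrow> (nat \<Rightarrow> nat) set" where
  "levs n i s = {x \<in> lev n i. twos n x = s}"

definition levge :: "nat \<Rightarrow> nat \<Rightarrow> nat \<Rightarrow> (nat \<Rightarrow> nat) set" where
  "levge n i s = {x \<in> lev n i. twos n x \<ge> s}"

definition w :: "nat \<Rightarrow> nat \<Rightarrow> nat \<Rightarrow> real" where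
  "w n i s =
     (real (card (lev n i)) * real (card (levge n (i+1) (s+1)))
      - real (card (lev n (i+1))) * real (card (levge n i (s+1))))
     / (real (card (levs n i s)) * real (card (lev n i)) * real (card (lev n (i+1)))
        * (real i - 2 * real s))"

end

theory Submission
  imports Defs
begin

text \<open>Double count the covering pairs between the levels L_i and L_(i+1), where y covers x if
  y arises from x by raising one coordinate j, and weight the pair by y_j. Every y is counted with
  total weight i + 1, and x with weight E(x) = n + i - 3 t(x), where t(x) is its number of twos.
  Hence (i+1)|L_(i+1)| is the sum of E over L_i, and (i+1)|L_(i+1)^(>=s+1)| is the sum of E over
  L_i^(>=s+1) plus 2(i - 2s)|L_i^s|, the contribution of raising a one of some x in L_i^s to a two.
  Since E is decreasing in t, its average over L_i^(>=s+1) is at most its average over L_i, and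
  what remains of the numerator of w is at most 2(i - 2s)|L_i^s||L_i| / (i+1).\<close>

lemma finite_cube: "finite (cube n)"
proof -
  have "cube n \<subseteq> {f. \<forall>x. (x \<in> {..<n} \<longrightarrow> f x \<in> {..2::nat}) \<and> (x \<notin> {..<n} \<longrightarrow> f x = 0)}"
    unfolding cube_def by auto
  then show ?thesis by (rule finite_subset) (rule finite_set_of_finite_funs, auto)
qed

lemma finite_lev: "finite (lev n i)"
  unfolding lev_def using finite_cube by auto

lemma sum_fun_upd_add:
  fixes f :: "'a \<Rightarrow> 'b::comm_monoid_add"
  assumes "finite A" "a \<in> A"
  shows "sum (f(a := b)) A + f a = sum f A + b"
proof -
  have "sum (f(a := b)) (A - {a}) = sum f (A - {a})"
    by (rule sum.cong) auto
  then have "sum (f(a := b)) A = b + sum f (A - {a})"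
    using assms by (simp add: sum.remove)
  moreover have "sum f A = f a + sum f (A - {a})"
    using assms by (rule sum.remove)
  ultimately show ?thesis by (simp add: ac_simps)
qed

lemma raise_in_lev:
  assumes "x \<in> lev n i" "j < n" "x j < 2"
  shows "x(j := x j + 1) \<in> lev n (Suc i)"
  using assms sum_fun_upd_add[of "{..<n}" j x "x j + 1"]
  unfolding lev_def cube_def by auto

lemma lower_in_lev:
  assumes "y \<in> lev n (Suc i)" "j < n" "0 < y j"
  shows "y(j := y j - 1) \<in> lev n i"
  using assms sum_fun_upd_add[of "{..<n}" j y "y j - 1"]
  unfolding lev_def cube_def by auto

lemma bij_betw_raise_lev:
  assumes "j < n"
  shows "bij_betw (\<lambda>x. x(j := x j + 1)) {x \<in> lev n i. x j < 2} {y \<in> lev n (Suc i). 0 < y j}"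
  by (rule bij_betw_byWitness[where f'="\<lambda>y. y(j := y j - 1)"])
    (use assms raise_in_lev lower_in_lev lev_def cube_def in \<open>auto simp: image_subset_iff\<close>)

lemma sum_if_const_eq_card:
  fixes c :: real
  assumes "finite A"
  shows "(\<Sum>x\<in>A. if P x then c else 0) = c * real (card {x \<in> A. P x})"
  using assms by (simp add: sum.inter_filter[symmetric])

lemma sum_lev_real:
  assumes "x \<in> lev n i"
  shows "(\<Sum>j<n. real (x j)) = real i"
  using assms unfolding lev_def by (simp flip: of_nat_sum)

lemma lev_le_2:
  assumes "x \<in> lev n i" "j < n"
  shows "x j \<le> 2"
  using assms unfolding lev_def cube_def by simp

lemma sum_lev_Suc_coord:
  fixes g :: "(nat \<Rightarrow> nat) \<Rightarrow> real"
  assumes "j < n"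
  shows "(\<Sum>y\<in>lev n (Suc i). real (y j) * g y)
    = (\<Sum>x\<in>lev n i. if x j < 2 then real (x j + 1) * g (x(j := x j + 1)) else 0)"
proof -
  have "(\<Sum>y\<in>lev n (Suc i). real (y j) * g y) = (\<Sum>y\<in>{y \<in> lev n (Suc i). 0 < y j}. real (y j) * g y)"
    by (rule sum.mono_neutral_right) (auto simp: finite_lev)
  also have "\<dots> = (\<Sum>x\<in>{x \<in> lev n i. x j < 2}. real (x j + 1) * g (x(j := x j + 1)))"
    by (subst sum.reindex_bij_betw[OF bij_betw_raise_lev[OF assms], symmetric]) simp
  also have "\<dots> = (\<Sum>x\<in>lev n i. if x j < 2 then real (x j + 1) * g (x(j := x j + 1)) else 0)"
    by (rule sum.inter_filter[OF finite_lev])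
  finally show ?thesis .
qed

lemma sum_lev_Suc_double_count:
  fixes g :: "(nat \<Rightarrow> nat) \<Rightarrow> real"
  shows "real (Suc i) * (\<Sum>y\<in>lev n (Suc i). g y)
    = (\<Sum>x\<in>lev n i. \<Sum>j<n. if x j < 2 then real (x j + 1) * g (x(j := x j + 1)) else 0)"
proof -
  have "real (Suc i) * (\<Sum>y\<in>lev n (Suc i). g y) = (\<Sum>y\<in>lev n (Suc i). \<Sum>j<n. real (y j) * g y)"
    unfolding sum_distrib_left
    by (rule sum.cong) (simp_all flip: sum_distrib_right add: sum_lev_real)
  also have "\<dots> = (\<Sum>j<n. \<Sum>y\<in>lev n (Suc i). real (y j) * g y)"
    by (rule sum.swap)
  also have "\<dots> = (\<Sum>j<n. \<Sum>x\<in>lev n i. if x j < 2 then real (x j + 1) * g (x(j := x j + 1)) else 0)"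
    by (simp add: sum_lev_Suc_coord)
  also have "\<dots> = (\<Sum>x\<in>lev n i. \<Sum>j<n. if x j < 2 then real (x j + 1) * g (x(j := x j + 1)) else 0)"
    by (rule sum.swap)
  finally show ?thesis .
qed

lemma twos_eq_sum:
  "real (twos n x) = (\<Sum>j<n. if x j = 2 then 1 else 0)"
proof -
  have "{j. j < n \<and> x j = 2} = {j \<in> {..<n}. x j = 2}" by auto
  then show ?thesis unfolding twos_def by (simp add: sum.inter_filter[symmetric])
qed

lemma twos_raise:
  assumes "j < n" "x j < 2"
  shows "twos n (x(j := x j + 1)) = twos n x + (if x j = 1 then 1 else 0)"
proof -
  have "{k. k < n \<and> (x(j := x j + 1)) k = 2}
      = (if x j = 1 then insert j else id) {k. k < n \<and> x k = 2}"
    using assms by auto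
  then show ?thesis using assms unfolding twos_def by simp
qed

definition up_degree :: "nat \<Rightarrow> (nat \<Rightarrow> nat) \<Rightarrow> real" where
  "up_degree n x = (\<Sum>j<n. if x j < 2 then real (x j + 1) else 0)"

lemma up_degree_lev:
  assumes "x \<in> lev n i"
  shows "up_degree n x = real n + real i - 3 * real (twos n x)"
proof -
  have "up_degree n x = (\<Sum>j<n. real (x j) + 1 - 3 * (if x j = 2 then 1 else 0))"
    unfolding up_degree_def using lev_le_2[OF assms]
    by (intro sum.cong) (auto simp: le_less)
  then show ?thesis
    by (simp add: sum.distrib sum_subtractf sum_distrib_left sum_lev_real[OF assms] twos_eq_sum)
qed

lemma sum_ones_lev:
  assumes "x \<in> lev n i"
  shows "(\<Sum>j<n. if x j = 1 then 1 else 0) = real i - 2 * real (twos n x)"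
proof -
  have "real i = (\<Sum>j<n. (if x j = 1 then 1 else 0) + 2 * (if x j = 2 then 1 else 0))"
    unfolding sum_lev_real[OF assms, symmetric] using lev_le_2[OF assms]
    by (intro sum.cong) (auto simp: le_Suc_eq numeral_2_eq_2)
  then show ?thesis
    by (simp add: sum.distrib sum_distrib_left twos_eq_sum)
qed

lemma sum_raise_twos_ge:
  assumes "x \<in> lev n i"
  shows "(\<Sum>j<n. if x j < 2 then real (x j + 1) * (if Suc s \<le> twos n (x(j := x j + 1)) then 1 else 0) else 0)
    = (if Suc s \<le> twos n x then up_degree n x else 0)
      + (if twos n x = s then 2 * (real i - 2 * real s) else 0)"
proof -
  have "(\<Sum>j<n. if x j < 2 then real (x j + 1) * (if Suc s \<le> twos n (x(j := x j + 1)) then 1 else 0) else 0)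
    = (\<Sum>j<n. (if Suc s \<le> twos n x then (if x j < 2 then real (x j + 1) else 0) else 0)
        + (if twos n x = s then 2 * (if x j = 1 then 1 else 0) else 0))"
    (is "(\<Sum>j<n. ?l j) = (\<Sum>j<n. ?r j)")
  proof (rule sum.cong)
    fix j assume "j \<in> {..<n}"
    then show "?l j = ?r j" using twos_raise[of j n x] by auto
  qed simp
  also have "\<dots> = (if Suc s \<le> twos n x then up_degree n x else 0)
      + (if twos n x = s then 2 * (\<Sum>j<n. if x j = 1 then 1 else 0) else 0)"
    by (simp add: sum.distrib up_degree_def sum_distrib_left)
  finally show ?thesis using sum_ones_lev[OF assms] by simp
qed

lemma card_lev_Suc:
  "real (Suc i) * real (card (lev n (Suc i))) = (\<Sum>x\<in>lev n i. up_degree n x)"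
proof -
  have "real (Suc i) * (\<Sum>y\<in>lev n (Suc i). 1) = (\<Sum>x\<in>lev n i. up_degree n x)"
    unfolding sum_lev_Suc_double_count up_degree_def by (intro sum.cong refl) simp
  then show ?thesis by simp
qed

lemma card_levge_Suc:
  "real (Suc i) * real (card (levge n (Suc i) (Suc s)))
    = (\<Sum>x\<in>levge n i (Suc s). up_degree n x) + 2 * (real i - 2 * real s) * real (card (levs n i s))"
proof -
  have "real (Suc i) * real (card (levge n (Suc i) (Suc s)))
      = real (Suc i) * (\<Sum>y\<in>lev n (Suc i). if Suc s \<le> twos n y then 1 else 0)"
    unfolding levge_def by (simp add: sum_if_const_eq_card finite_lev)
  also have "\<dots> = (\<Sum>x\<in>lev n i. (if Suc s \<le> twos n x then up_degree n x else 0)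
      + (if twos n x = s then 2 * (real i - 2 * real s) else 0))"
    unfolding sum_lev_Suc_double_count by (rule sum.cong) (simp_all add: sum_raise_twos_ge)
  also have "\<dots> = (\<Sum>x\<in>lev n i. if Suc s \<le> twos n x then up_degree n x else 0)
      + (\<Sum>x\<in>lev n i. if twos n x = s then 2 * (real i - 2 * real s) else 0)"
    by (rule sum.distrib)
  also have "\<dots> = (\<Sum>x\<in>levge n i (Suc s). up_degree n x) + 2 * (real i - 2 * real s) * real (card (levs n i s))"
    unfolding levge_def levs_def sum.inter_filter[OF finite_lev] sum_if_const_eq_card[OF finite_lev]
    by (simp only: mult.commute)
  finally show ?thesis .
qed

lemma card_mult_sum_filter_le:
  fixes f :: "'a \<Rightarrow> real"
  assumes "finite X"
    and "\<And>x. x \<in> X \<Longrightarrow> P x \<Longrightarrow> f x \<le> K"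
    and "\<And>x. x \<in> X \<Longrightarrow> \<not> P x \<Longrightarrow> K \<le> f x"
  shows "real (card X) * (\<Sum>x\<in>{x \<in> X. P x}. f x) \<le> real (card {x \<in> X. P x}) * (\<Sum>x\<in>X. f x)"
proof -
  let ?P = "{x \<in> X. P x}" and ?N = "{x \<in> X. \<not> P x}"
  have X: "X = ?P \<union> ?N" by auto
  have card_X: "card X = card ?P + card ?N"
    using assms(1) by (subst X, intro card_Un_disjoint) auto
  have sum_X: "(\<Sum>x\<in>X. f x) = (\<Sum>x\<in>?P. f x) + (\<Sum>x\<in>?N. f x)"
    using assms(1) by (subst X, intro sum.union_disjoint) auto
  have "real (card ?N) * (\<Sum>x\<in>?P. f x) \<le> real (card ?N) * (real (card ?P) * K)"
    using sum_bounded_above[of ?P f K] assms(2) by (intro mult_left_mono) auto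
  also have "\<dots> = real (card ?P) * (real (card ?N) * K)"
    by simp
  also have "\<dots> \<le> real (card ?P) * (\<Sum>x\<in>?N. f x)"
    using sum_bounded_below[of ?N K f] assms(3) by (intro mult_left_mono) auto
  finally have "real (card ?N) * (\<Sum>x\<in>?P. f x) \<le> real (card ?P) * (\<Sum>x\<in>?N. f x)" .
  then show ?thesis
    unfolding card_X sum_X by (simp add: algebra_simps)
qed

lemma w_numerator_le:
  "real (Suc i) * (real (card (lev n i)) * real (card (levge n (Suc i) (Suc s)))
      - real (card (lev n (Suc i))) * real (card (levge n i (Suc s))))
    \<le> 2 * (real i - 2 * real s) * real (card (levs n i s)) * real (card (lev n i))"
proof -
  define A where "A = real (card (lev n i))"
  define B where "B = real (card (lev n (Suc i)))"
  define A' where "A' = real (card (levge n i (Suc s)))"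
  define B' where "B' = real (card (levge n (Suc i) (Suc s)))"
  define S where "S = (\<Sum>x\<in>lev n i. up_degree n x)"
  define S' where "S' = (\<Sum>x\<in>levge n i (Suc s). up_degree n x)"
  define c where "c = 2 * (real i - 2 * real s) * real (card (levs n i s))"
  have B: "real (Suc i) * B = S" and B': "real (Suc i) * B' = S' + c"
    unfolding B_def S_def B'_def S'_def c_def by (rule card_lev_Suc card_levge_Suc)+
  have "real (Suc i) * (A * B' - B * A') = A * (real (Suc i) * B') - (real (Suc i) * B) * A'"
    by (simp add: algebra_simps)
  also have "\<dots> = (A * S' - A' * S) + c * A"
    unfolding B B' by (simp add: algebra_simps)
  also have "\<dots> \<le> c * A"
  proof -
    have "A * S' \<le> A' * S"
      unfolding A_def A'_def S_def S'_def levge_def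
      by (rule card_mult_sum_filter_le[where K = "real n + real i - 3 * real (Suc s)"])
        (auto simp: finite_lev up_degree_lev)
    then show ?thesis by simp
  qed
  finally show ?thesis
    unfolding A_def B_def A'_def B'_def c_def .
qed

theorem mainTheorem11:
  fixes n i s :: nat
  assumes "n \<ge> 5" and "1 \<le> i" and "i \<le> n - 1" and "real s < real i / 2"
  shows "w n i s \<le> 2 / (real (i + 1) * real (card (lev n (i + 1))))"
proof -
  define N where "N = real (card (lev n i)) * real (card (levge n (Suc i) (Suc s)))
      - real (card (lev n (Suc i))) * real (card (levge n i (Suc s)))"
  define D where "D = real (card (levs n i s)) * real (card (lev n i)) * (real i - 2 * real s)"
  define B where "B = real (card (lev n (Suc i)))"
  have "0 \<le> D"
    using assms(4) unfolding D_def by simp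
  have "real (Suc i) * N \<le> 2 * D"
    using w_numerator_le[of i n s] unfolding N_def D_def by (simp only: mult_ac)
  then have N_le: "N \<le> 2 * D / real (Suc i)"
    by (simp add: pos_le_divide_eq mult.commute)
  have "w n i s = N / (D * B)"
    unfolding w_def N_def D_def B_def by (simp add: ac_simps)
  also have "\<dots> \<le> 2 * D / real (Suc i) / (D * B)"
    using N_le \<open>0 \<le> D\<close> unfolding B_def by (intro divide_right_mono) simp_all
  also have "\<dots> \<le> 2 / (real (i + 1) * real (card (lev n (i + 1))))"
    unfolding B_def by (cases "D = 0") (simp_all add: divide_divide_eq_left ac_simps)
  finally show ?thesis .
qed

end
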